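(* Let $\Omega\subset\mathbb{R}^2$ be open and bounded, and let $G\in C^\infty(\bar\Omega,\mathbb{R}^{2\times2})$ be symmetric positive definite with $A=\sqrt G$. Assume $\min\mathcal{E}=0$, i.e. there is a smooth $u:\Omega\to\mathbb{R}^2$ with $(\nabla u)^T\nabla u=G$ and $\det\nabla u>0$ in $\Omega$. Then for this $u$, $$\mathcal{F}_1(u):=\int_\Omega QW(\nabla u(x)\lambda(x))\,dx=0,\qquad \lambda(x)=\mathrm{diag}\{|A(x)e_1|^{-1},|A(x)e_2|^{-1}\}.$$
   Context: $\mathcal{E}(u)=\int_\Omega\overline W(\nabla u\,A^{-1})\,dx$, where $\overline W:\mathbb{R}^{2\times2}\to[0,\infty]$ satisfies $\overline W(RF)=\overline W(F)$, $\overline W(R)=0$ and $\overline W(F)\ge c\,\mathrm{dist}^2(F,SO(2))$ for all $F$, $R\in SO(2)$, some $c>0$; so $\mathcal{E}(u)=0$ iff $\nabla u\in SO(2)A$ a.e. $W(M)=\sum_{j=1}^2(|Me_j|-1)^2$ and $QW$ is its quasiconvex envelope. *)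

theory Defs
  imports "HOL-Analysis.Analysis"
begin

text \<open>C^infinity on S: there is a family of higher derivatives D m x [v1,...,vm]
  (the m-th derivative at x applied to directions v1..vm), each of which has the next one
  as its (Frechet) derivative within S.\<close>
definition smooth_on :: "('a::real_normed_vector \<Rightarrow> 'b::real_normed_vector) \<Rightarrow> 'a set \<Rightarrow> bool" where
  "smooth_on f S \<longleftrightarrow>
     (\<exists>D :: nat \<Rightarrow> 'a \<Rightarrow> 'a list \<Rightarrow> 'b.
        (\<forall>x\<in>S. D 0 x [] = f x) \<and>
        (\<forall>m vs x. length vs = m \<and> x \<in> S \<longrightarrow>
           ((\<lambda>y. D m y vs) has_derivative (\<lambda>v. D (Suc m) x (v # vs))) (at x within S)))"

text \<open>Gradient (Jacobian matrix) of a map R^2 -> R^2 at x: entry (i,j) is d u_i / d x_j.\<close>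
definition grad :: "(real^2 \<Rightarrow> real^2) \<Rightarrow> real^2 \<Rightarrow> real^2^2" where
  "grad u x = matrix (frechet_derivative u (at x))"

definition e :: "2 \<Rightarrow> real^2" where
  "e j = axis j 1"

definition W :: "real^2^2 \<Rightarrow> real" where
  "W M = (\<Sum>j\<in>UNIV. (norm (M *v e j) - 1)^2)"

definition unit_cube :: "(real^2) set" where
  "unit_cube = {x. \<forall>i. 0 < x $ i \<and> x $ i < 1}"

text \<open>Quasiconvexity (Morrey), tested with smooth compactly supported maps on the unit cube
  (which has measure 1, so the integral is the average).\<close>
definition quasiconvex :: "(real^2^2 \<Rightarrow> real) \<Rightarrow> bool" where
  "quasiconvex f \<longleftrightarrow>
     (\<forall>F \<phi>. smooth_on \<phi> UNIV \<and> (\<exists>K. compact K \<and> K \<subseteq> unit_cube \<and> (\<forall>x. x \<notin> K \<longrightarrow> \<phi> x = 0))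
        \<longrightarrow> set_integrable lebesgue unit_cube (\<lambda>x. f (F + grad \<phi> x))
          \<and> f F \<le> (LINT x:unit_cube|lebesgue. f (F + grad \<phi> x)))"

definition QW :: "real^2^2 \<Rightarrow> real" where
  "QW M = Sup {g M | g. quasiconvex g \<and> (\<forall>N. g N \<le> W N)}"

end

theory Submission
  imports Defs
begin

text \<open>Since \<open>(\<nabla>u)\<^sup>T\<nabla>u = G = A\<^sup>TA\<close>, the columns of \<open>\<nabla>u\<close> and \<open>A\<close> have equal lengths,
  so \<open>\<nabla>u \<lambda>\<close> has unit columns and \<open>W(\<nabla>u \<lambda>) = 0\<close> pointwise. The quasiconvex envelope is
  squeezed between the quasiconvex function \<open>0\<close> and \<open>W\<close>, hence the integrand vanishes
  identically.\<close>

lemma inner_matrix_vector_mult: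
  fixes M :: "real^'n^'m"
  shows "(M *v v) \<bullet> (M *v w) = v \<bullet> ((transpose M ** M) *v w)"
  by (metis adjoint_matrix adjoint_works matrix_vector_mul_linear matrix_vector_mul_assoc)

lemma norm_matrix_vector_eq_if_gram_eq:
  fixes M N :: "real^'n^'m"
  assumes "transpose M ** M = transpose N ** N"
  shows "norm (M *v v) = norm (N *v v)"
  using assms by (simp add: norm_eq_sqrt_inner inner_matrix_vector_mult)

lemma matrix_vector_mult_nonzero_if_pos_def:
  fixes A :: "real^'n^'n"
  assumes "\<forall>v. v \<noteq> 0 \<longrightarrow> v \<bullet> (A *v v) > 0" and "v \<noteq> 0"
  shows "A *v v \<noteq> 0"
  using assms by force

lemma e_nonzero: "e j \<noteq> 0"
  unfolding e_def by (simp add: axis_eq_0_iff)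

lemma diagonal_mult_e:
  "((\<chi> i j. if i = j then c i else 0) :: real^2^2) *v e j = c j *\<^sub>R e j"
  unfolding e_def
  by (auto simp: vec_eq_iff matrix_vector_mult_def axis_def if_distrib[of "\<lambda>x. x * _"]
      cong: if_cong)

lemma W_nonneg: "0 \<le> W M"
  unfolding W_def by (simp add: sum_nonneg)

lemma W_eq_0_if_unit_columns:
  assumes "\<And>j. norm (M *v e j) = 1"
  shows "W M = 0"
  unfolding W_def by (simp add: assms)

lemma quasiconvex_zero: "quasiconvex (\<lambda>_. 0)"
  unfolding quasiconvex_def by (simp add: set_integrable_def)

lemma QW_nonneg_le_W: "0 \<le> QW M \<and> QW M \<le> W M"
proof -
  let ?S = "{g M | g. quasiconvex g \<and> (\<forall>N. g N \<le> W N)}"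
  have zero_mem: "0 \<in> ?S"
    using quasiconvex_zero W_nonneg by force
  have bounded: "\<forall>y\<in>?S. y \<le> W M"
    by blast
  have "0 \<le> Sup ?S"
    by (rule cSup_upper) (use zero_mem bounded in \<open>auto simp: bdd_above_def\<close>)
  moreover have "Sup ?S \<le> W M"
    by (rule cSup_least) (use zero_mem bounded in auto)
  ultimately show ?thesis
    unfolding QW_def by simp
qed

lemma QW_eq_0_if_W_eq_0: "W M = 0 \<Longrightarrow> QW M = 0"
  using QW_nonneg_le_W[of M] by simp

lemma W_column_normalization_eq_0:
  fixes M A :: "real^2^2"
  assumes "transpose A = A" and "\<forall>v. v \<noteq> 0 \<longrightarrow> v \<bullet> (A *v v) > 0"
    and "transpose M ** M = A ** A"
  shows "W (M ** (\<chi> i j. if i = j then 1 / norm (A *v e i) else 0)) = 0"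
proof (rule W_eq_0_if_unit_columns)
  fix j
  have same_length: "norm (M *v e j) = norm (A *v e j)"
    using assms(1,3) by (intro norm_matrix_vector_eq_if_gram_eq) simp
  have "A *v e j \<noteq> 0"
    using assms(2) e_nonzero by (rule matrix_vector_mult_nonzero_if_pos_def)
  moreover have "(M ** (\<chi> i j. if i = j then 1 / norm (A *v e i) else 0)) *v e j
      = (1 / norm (A *v e j)) *\<^sub>R (M *v e j)"
    by (simp add: matrix_vector_mul_assoc[symmetric] diagonal_mult_e matrix_vector_mult_scaleR)
  ultimately show "norm ((M ** (\<chi> i j. if i = j then 1 / norm (A *v e i) else 0)) *v e j) = 1"
    using same_length by simp
qed

theorem lemma6p1:
  fixes \<Omega> :: "(real^2) set"
    and G A :: "real^2 \<Rightarrow> real^2^2"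
    and u :: "real^2 \<Rightarrow> real^2"
  assumes "open \<Omega>" and "bounded \<Omega>"
    and "smooth_on G (closure \<Omega>)"
    and "\<forall>x\<in>closure \<Omega>. transpose (G x) = G x \<and> (\<forall>v. v \<noteq> 0 \<longrightarrow> v \<bullet> (G x *v v) > 0)"
    and "\<forall>x\<in>closure \<Omega>. transpose (A x) = A x \<and> (\<forall>v. v \<noteq> 0 \<longrightarrow> v \<bullet> (A x *v v) > 0)
                         \<and> A x ** A x = G x"
    and "smooth_on u \<Omega>"
    and "\<forall>x\<in>\<Omega>. transpose (grad u x) ** grad u x = G x \<and> det (grad u x) > 0"
  shows "set_integrable lebesgue \<Omega>
           (\<lambda>x. QW (grad u x ** (\<chi> i j. if i = j then 1 / norm (A x *v e i) else 0)))
       \<and> (LINT x:\<Omega>|lebesgue.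
           QW (grad u x ** (\<chi> i j. if i = j then 1 / norm (A x *v e i) else 0))) = 0"
proof -
  let ?F = "\<lambda>x. QW (grad u x ** (\<chi> i j. if i = j then 1 / norm (A x *v e i) else 0))"
  have "?F x = 0" if "x \<in> \<Omega>" for x
  proof -
    have "x \<in> closure \<Omega>"
      using that closure_subset by blast
    then show ?thesis
      using assms(5,7) that by (intro QW_eq_0_if_W_eq_0 W_column_normalization_eq_0) auto
  qed
  then have "(\<lambda>x. indicator \<Omega> x *\<^sub>R ?F x) = (\<lambda>_. 0)"
    by (auto simp: indicator_def fun_eq_iff)
  then show ?thesis
    unfolding set_integrable_def set_lebesgue_integral_def by simp
qed

end
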